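(* Let $\alpha>0$ and $s_{\min}>0$, and put $\mu_0=\dfrac{2\alpha+s_{\min}-\sqrt{s_{\min}^2+4\alpha s_{\min}}}{2\alpha}$ (so $\mu_0\in(0,1)$ and $\frac{(1-\mu_0)^2}{\mu_0}=\frac{s_{\min}}{\alpha}$). Let $X_1,\dots,X_m$ be independent random variables with $X_i\sim\operatorname{Ber}(p_i,s_i)$, where $p_i\in(0,1]$ and $0<s_i\le s_{\min}$, and suppose $\sum_{i=1}^m p_is_i\le \mu_0$. Then $B=\sum_{i=1}^m X_i$ satisfies $\mathbb{P}(B>1)\le\alpha$.
   Context: For $p\in[0,1]$ and $s>0$, $\operatorname{Ber}(p,s)$ denotes the scaled Bernoulli distribution: $X\sim\operatorname{Ber}(p,s)$ means $X=s$ with probability $p$ and $X=0$ with probability $1-p$. *)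

theory Defs
  imports "HOL-Probability.Probability"
begin

definition scaled_bernoulli :: "'a measure \<Rightarrow> ('a \<Rightarrow> real) \<Rightarrow> real \<Rightarrow> real \<Rightarrow> bool" where
  "scaled_bernoulli M X p s \<longleftrightarrow>
     X \<in> borel_measurable M \<and>
     measure M {x \<in> space M. X x = s} = p \<and>
     measure M {x \<in> space M. X x = 0} = 1 - p"

end

theory Submission
  imports Defs
begin

text \<open>Chebyshev's inequality. The centred sum \<open>B - \<mu>\<close>, with \<open>\<mu> = \<Sum>i. p\<^sub>i s\<^sub>i\<close>, has
  variance \<open>\<Sum>i. s\<^sub>i\<^sup>2 p\<^sub>i (1 - p\<^sub>i) \<le> s\<^sub>m\<^sub>i\<^sub>n \<mu>\<close> by independence, so
  \<open>P(B > 1) \<le> P(|B - \<mu>| \<ge> 1 - \<mu>) \<le> s\<^sub>m\<^sub>i\<^sub>n \<mu> / (1 - \<mu>)\<^sup>2\<close>. The threshold \<open>\<mu>\<^sub>0\<close> is the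
  smaller root of \<open>\<alpha> (1 - \<mu>)\<^sup>2 = s\<^sub>m\<^sub>i\<^sub>n \<mu>\<close>, so this bound is at most \<open>\<alpha>\<close> for \<open>0 \<le> \<mu> \<le> \<mu>\<^sub>0\<close>.\<close>

lemma integrable_mult_of_square_integrable:
  fixes f g :: "'a \<Rightarrow> real"
  assumes [measurable]: "f \<in> borel_measurable M" "g \<in> borel_measurable M"
    and "integrable M (\<lambda>x. (f x)\<^sup>2)" "integrable M (\<lambda>x. (g x)\<^sup>2)"
  shows "integrable M (\<lambda>x. f x * g x)"
proof (rule Bochner_Integration.integrable_bound)
  show "integrable M (\<lambda>x. (f x)\<^sup>2 + (g x)\<^sup>2)"
    using assms(3,4) by (rule Bochner_Integration.integrable_add)
  have "\<bar>a * b\<bar> \<le> a\<^sup>2 + b\<^sup>2" for a b :: real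
  proof -
    have "2 * \<bar>a\<bar> * \<bar>b\<bar> \<le> \<bar>a\<bar>\<^sup>2 + \<bar>b\<bar>\<^sup>2"
      by (rule sum_squares_bound)
    moreover have "0 \<le> \<bar>a\<bar> * \<bar>b\<bar>"
      by simp
    ultimately show ?thesis
      unfolding abs_mult power2_abs by linarith
  qed
  then show "AE x in M. norm (f x * g x) \<le> norm ((f x)\<^sup>2 + (g x)\<^sup>2)"
    by simp
qed simp

lemma integrable_square_sum:
  fixes f :: "'i \<Rightarrow> 'a \<Rightarrow> real"
  assumes "\<And>i. i \<in> I \<Longrightarrow> f i \<in> borel_measurable M"
    and "\<And>i. i \<in> I \<Longrightarrow> integrable M (\<lambda>x. (f i x)\<^sup>2)"
  shows "integrable M (\<lambda>x. (\<Sum>i\<in>I. f i x)\<^sup>2)"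
  unfolding power2_eq_square sum_product
  using assms by (intro Bochner_Integration.integrable_sum integrable_mult_of_square_integrable) auto

lemma (in prob_space) variance_add_indep:
  fixes X Y :: "'a \<Rightarrow> real"
  assumes indep: "indep_var borel X borel Y"
    and [simp]: "integrable M X" "integrable M Y"
    and [simp]: "integrable M (\<lambda>x. (X x)\<^sup>2)" "integrable M (\<lambda>x. (Y x)\<^sup>2)"
  shows "variance (\<lambda>x. X x + Y x) = variance X + variance Y"
proof -
  have [simp]: "integrable M (\<lambda>x. X x * Y x)"
    and EXY: "expectation (\<lambda>x. X x * Y x) = expectation X * expectation Y"
    using indep_var_integrable[OF indep] indep_var_lebesgue_integral[OF indep] by simp_all
  have "variance (\<lambda>x. X x + Y x)
      = expectation (\<lambda>x. (X x)\<^sup>2 + (Y x)\<^sup>2 + 2 * (X x * Y x)) - (expectation X + expectation Y)\<^sup>2"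
    by (subst variance_eq) (simp_all add: power2_sum mult.assoc)
  then show ?thesis
    by (simp add: variance_eq EXY power2_sum)
qed

lemma (in prob_space) variance_sum_indep:
  fixes X :: "'i \<Rightarrow> 'a \<Rightarrow> real"
  assumes "finite I" "indep_vars (\<lambda>_. borel) X I"
    and "\<And>i. i \<in> I \<Longrightarrow> integrable M (X i)"
    and "\<And>i. i \<in> I \<Longrightarrow> integrable M (\<lambda>x. (X i x)\<^sup>2)"
  shows "variance (\<lambda>x. \<Sum>i\<in>I. X i x) = (\<Sum>i\<in>I. variance (X i))"
  using assms
proof (induction I rule: finite_induct)
  case (insert i I)
  have "variance (\<lambda>x. \<Sum>j\<in>insert i I. X j x) = variance (\<lambda>x. X i x + (\<Sum>j\<in>I. X j x))"
    using insert.hyps by simp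
  also have "\<dots> = variance (X i) + variance (\<lambda>x. \<Sum>j\<in>I. X j x)"
  proof (rule variance_add_indep)
    show "indep_var borel (X i) borel (\<lambda>x. \<Sum>j\<in>I. X j x)"
      using insert.hyps insert.prems(1) by (rule indep_vars_sum)
    show "integrable M (\<lambda>x. (\<Sum>j\<in>I. X j x)\<^sup>2)"
      using insert.prems by (intro integrable_square_sum borel_measurable_integrable) auto
  qed (use insert.prems in auto)
  also have "variance (\<lambda>x. \<Sum>j\<in>I. X j x) = (\<Sum>j\<in>I. variance (X j))"
    using insert.prems by (intro insert.IH indep_vars_subset[OF insert.prems(1)]) auto
  finally show ?case
    using insert.hyps by simp
qed simp

lemma (in prob_space) scaled_bernoulli_AE_values:
  assumes "scaled_bernoulli M X p s" "s \<noteq> 0"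
  shows "AE x in M. X x = s \<or> X x = 0"
proof -
  have [measurable]: "X \<in> borel_measurable M"
    and "prob {x \<in> space M. X x = s} = p" "prob {x \<in> space M. X x = 0} = 1 - p"
    using assms(1) unfolding scaled_bernoulli_def by auto
  moreover have "{x \<in> space M. X x = s \<or> X x = 0} = {x \<in> space M. X x = s} \<union> {x \<in> space M. X x = 0}"
    by auto
  moreover have "prob ({x \<in> space M. X x = s} \<union> {x \<in> space M. X x = 0})
      = prob {x \<in> space M. X x = s} + prob {x \<in> space M. X x = 0}"
    using assms(2) by (intro finite_measure_Union) auto
  ultimately have "prob {x \<in> space M. X x = s \<or> X x = 0} = 1"
    by simp
  then show ?thesis
    by (subst (asm) prob_Collect_eq_1) simp_all
qed

lemma (in prob_space) scaled_bernoulli_integral: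
  fixes f :: "real \<Rightarrow> real"
  assumes X: "scaled_bernoulli M X p s" and "s \<noteq> 0" and [measurable]: "f \<in> borel_measurable borel"
  shows "integrable M (\<lambda>x. f (X x))" and "expectation (\<lambda>x. f (X x)) = p * f s + (1 - p) * f 0"
proof -
  define A where "A = {x \<in> space M. X x = s}"
  define Z where "Z = {x \<in> space M. X x = 0}"
  have [measurable]: "X \<in> borel_measurable M" and "prob A = p" "prob Z = 1 - p"
    using X unfolding scaled_bernoulli_def A_def Z_def by auto
  have [measurable]: "A \<in> events" "Z \<in> events"
    unfolding A_def Z_def by measurable
  have indicator_integrable: "integrable M (indicator B :: 'a \<Rightarrow> real)" if "B \<in> events" for B
    using that by (intro integrable_real_indicator) (auto simp: emeasure_eq_measure)
  have eq: "AE x in M. f (X x) = f s * indicator A x + f 0 * indicator Z x"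
    using AE_space scaled_bernoulli_AE_values[OF assms(1,2)]
    by eventually_elim (use \<open>s \<noteq> 0\<close> in \<open>auto simp: A_def Z_def split: split_indicator\<close>)
  have "integrable M (\<lambda>x. f s * indicator A x + f 0 * indicator Z x)"
    by (simp add: indicator_integrable)
  then show "integrable M (\<lambda>x. f (X x))"
    by (subst integrable_cong_AE[OF _ _ eq]) simp_all
  have "expectation (\<lambda>x. f (X x)) = expectation (\<lambda>x. f s * indicator A x + f 0 * indicator Z x)"
    by (rule integral_cong_AE[OF _ _ eq]) simp_all
  also have "\<dots> = p * f s + (1 - p) * f 0"
    using \<open>prob A = p\<close> \<open>prob Z = 1 - p\<close> by (simp add: indicator_integrable)
  finally show "expectation (\<lambda>x. f (X x)) = p * f s + (1 - p) * f 0" .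
qed

lemma (in prob_space) scaled_bernoulli_moments:
  assumes "scaled_bernoulli M X p s" "s \<noteq> 0"
  shows "integrable M X" "integrable M (\<lambda>x. (X x)\<^sup>2)"
    and "expectation X = p * s" "variance X = s\<^sup>2 * p * (1 - p)"
proof -
  show "integrable M X" "expectation X = p * s"
    using scaled_bernoulli_integral[OF assms, of "\<lambda>t. t"] by simp_all
  show "integrable M (\<lambda>x. (X x)\<^sup>2)"
    using scaled_bernoulli_integral[OF assms, of "\<lambda>t. t\<^sup>2"] by simp
  then show "variance X = s\<^sup>2 * p * (1 - p)"
    using scaled_bernoulli_integral[OF assms, of "\<lambda>t. (t - p * s)\<^sup>2"] \<open>expectation X = p * s\<close>
    by (simp add: power2_eq_square algebra_simps)
qed

lemma (in prob_space) scaled_bernoulli_variance_le: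
  assumes X: "scaled_bernoulli M X p s" and "0 < s" "s \<le> c"
  shows "variance X \<le> c * expectation X"
proof -
  have "0 \<le> p"
    using X unfolding scaled_bernoulli_def by auto
  have "variance X = s\<^sup>2 * p * (1 - p)"
    using scaled_bernoulli_moments(4)[OF X] \<open>0 < s\<close> by simp
  also have "\<dots> \<le> s * (p * s)"
    using zero_le_square[of "p * s"] by (simp add: power2_eq_square algebra_simps)
  also have "\<dots> \<le> c * (p * s)"
    using \<open>0 \<le> p\<close> \<open>0 < s\<close> \<open>s \<le> c\<close> by (intro mult_right_mono) simp_all
  also have "p * s = expectation X"
    using scaled_bernoulli_moments(3)[OF X] \<open>0 < s\<close> by simp
  finally show ?thesis .
qed

lemma le_smaller_root_imp_quadratic_bound:
  fixes a s \<mu> :: real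
  assumes "0 < a" "0 < s" "0 \<le> \<mu>" "\<mu> \<le> (2 * a + s - sqrt (s\<^sup>2 + 4 * a * s)) / (2 * a)"
  shows "\<mu> < 1" "s * \<mu> \<le> a * (1 - \<mu>)\<^sup>2"
proof -
  define D where "D = sqrt (s\<^sup>2 + 4 * a * s)"
  define \<mu>\<^sub>0 \<mu>\<^sub>1 where "\<mu>\<^sub>0 = (2 * a + s - D) / (2 * a)" and "\<mu>\<^sub>1 = (2 * a + s + D) / (2 * a)"
  have "D\<^sup>2 = s\<^sup>2 + 4 * a * s" "s < D"
    unfolding D_def using assms by (simp_all add: real_less_rsqrt)
  have roots: "a * (1 - \<mu>)\<^sup>2 - s * \<mu> = a * (\<mu> - \<mu>\<^sub>0) * (\<mu> - \<mu>\<^sub>1)"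
    unfolding \<mu>\<^sub>0_def \<mu>\<^sub>1_def using assms \<open>D\<^sup>2 = s\<^sup>2 + 4 * a * s\<close>
    by (simp add: field_simps power2_eq_square) algebra
  have "\<mu> \<le> \<mu>\<^sub>0" "\<mu>\<^sub>0 < 1" "\<mu>\<^sub>0 \<le> \<mu>\<^sub>1"
    using assms \<open>s < D\<close> unfolding D_def \<mu>\<^sub>0_def \<mu>\<^sub>1_def by (simp_all add: divide_simps)
  then have "0 \<le> a * (\<mu> - \<mu>\<^sub>0) * (\<mu> - \<mu>\<^sub>1)"
    using \<open>0 < a\<close> by (simp add: mult_nonpos_nonpos mult.assoc)
  then show "\<mu> < 1" "s * \<mu> \<le> a * (1 - \<mu>)\<^sup>2"
    using roots \<open>\<mu> \<le> \<mu>\<^sub>0\<close> \<open>\<mu>\<^sub>0 < 1\<close> by simp_all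
qed

theorem mainTheorem1:
  fixes M :: "'a measure" and m :: nat and p s :: "nat \<Rightarrow> real"
    and X :: "nat \<Rightarrow> 'a \<Rightarrow> real" and \<alpha> s_min :: real
  assumes "prob_space M"
    and "\<alpha> > 0" and "s_min > 0"
    and "\<And>i. i < m \<Longrightarrow> 0 < p i \<and> p i \<le> 1"
    and "\<And>i. i < m \<Longrightarrow> 0 < s i \<and> s i \<le> s_min"
    and "\<And>i. i < m \<Longrightarrow> scaled_bernoulli M (X i) (p i) (s i)"
    and "prob_space.indep_vars M (\<lambda>_. borel) X {..<m}"
    and "(\<Sum>i<m. p i * s i) \<le> (2 * \<alpha> + s_min - sqrt (s_min ^ 2 + 4 * \<alpha> * s_min)) / (2 * \<alpha>)"
  shows "measure M {x \<in> space M. (\<Sum>i<m. X i x) > 1} \<le> \<alpha>"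
proof -
  interpret prob_space M by fact
  define B where "B x = (\<Sum>i<m. X i x)" for x
  define \<mu> where "\<mu> = (\<Sum>i<m. p i * s i)"
  have "s i \<noteq> 0" if "i < m" for i
    using assms(5)[OF that] by simp
  note moments = scaled_bernoulli_moments[OF assms(6) this]
  have "expectation B = \<mu>"
    unfolding B_def \<mu>_def using moments by (simp add: Bochner_Integration.integral_sum)
  have "variance B = (\<Sum>i<m. variance (X i))"
    unfolding B_def using moments assms(7) by (intro variance_sum_indep) auto
  also have "\<dots> \<le> (\<Sum>i<m. s_min * expectation (X i))"
    using assms(5,6) by (intro sum_mono scaled_bernoulli_variance_le) auto
  also have "\<dots> = s_min * \<mu>"
    using moments(3) by (simp add: \<mu>_def sum_distrib_left)
  finally have "variance B \<le> s_min * \<mu>" .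
  have "0 \<le> \<mu>"
    unfolding \<mu>_def using assms(4,5) by (intro sum_nonneg) (simp add: less_imp_le)
  then have "\<mu> < 1" "s_min * \<mu> \<le> \<alpha> * (1 - \<mu>)\<^sup>2"
    using le_smaller_root_imp_quadratic_bound assms(2,3,8) unfolding \<mu>_def by blast+
  have "prob {x \<in> space M. B x > 1} \<le> prob {x \<in> space M. \<bar>B x - expectation B\<bar> \<ge> 1 - \<mu>}"
    using \<open>expectation B = \<mu>\<close> moments unfolding B_def
    by (intro finite_measure_mono) (auto intro!: borel_measurable_sum borel_measurable_integrable)
  also have "\<dots> \<le> variance B / (1 - \<mu>)\<^sup>2"
    using \<open>\<mu> < 1\<close> moments unfolding B_def
    by (intro Chebyshev_inequality integrable_square_sum borel_measurable_integrable borel_measurable_sum) auto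
  also have "\<dots> \<le> \<alpha>"
    using \<open>variance B \<le> s_min * \<mu>\<close> \<open>s_min * \<mu> \<le> \<alpha> * (1 - \<mu>)\<^sup>2\<close> \<open>\<mu> < 1\<close>
    by (simp add: pos_divide_le_eq)
  finally show ?thesis
    unfolding B_def .
qed

end
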